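(* Let $P,Q$ be strings of the same positive length $p$, let $n$ be a positive integer, and let $d=\lfloor n/p\rfloor$ and $r=n\bmod p$. Let $X=P^*[0..n)$ and $Y=Q^*[0..n)$. Then \[ \mathrm{ED}(X,Y)\le \mathrm{ED}(P[0..r),Q[0..r))+\min_{s\in\mathbb Z}\big(d\cdot\mathrm{ED}(P,Q^{\circlearrowright s})+2|s|\big)\le 3\,\mathrm{ED}(X,Y). \]
   Context: $\mathrm{ED}$ is edit distance. $Z[i..j)$ denotes $Z[i]\cdots Z[j-1]$. For a string $Q$, $Q^*$ is the infinite string $QQQ\cdots$. For an integer $s$, the cyclic rotation $Q^{\circlearrowright s}$ is the string of length $|Q|$ with $Q^{\circlearrowright s}[i]=Q[(i+s)\bmod |Q|]$. *)

theory Defs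
  imports Main
begin

fun ED :: "'a list \<Rightarrow> 'a list \<Rightarrow> nat" where
  "ED [] ys = length ys"
| "ED (x # xs) [] = Suc (length xs)"
| "ED (x # xs) (y # ys) =
     min (min (ED xs (y # ys) + 1) (ED (x # xs) ys + 1))
         (ED xs ys + (if x = y then 0 else 1))"

text \<open>Prefix of length n of the infinite string Q Q Q ... (Q nonempty).\<close>
definition pow_prefix :: "'a list \<Rightarrow> nat \<Rightarrow> 'a list" where
  "pow_prefix Q n = map (\<lambda>i. Q ! (i mod length Q)) [0..<n]"

definition rot :: "'a list \<Rightarrow> int \<Rightarrow> 'a list" where
  "rot Q s = map (\<lambda>i. Q ! nat ((int i + s) mod int (length Q))) [0..<length Q]"

end

(*
  Cut X = P^d @ P[0..r) and Y = Q^d @ Q[0..r).  Upper bound: align the tails directly and the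
  periods one by one against a rotation R = BA of Q = AB; since Q^d and R^d differ only by
  moving A to the back (or B to the front), this costs 2 min(|A|,|B|) <= 2|s| on top of
  d ED(P,R).  Lower bound: an optimal alignment of X with Y cuts Y into blocks Y_0 .. Y_(d-1)
  matched with the copies of P, and a tail matched with P[0..r).  Take the cheapest block Y_i
  and let s be the offset of its start from i p.  The rotation of Q by s is the length-p window
  of the periodic string at the start of Y_i, so Y_i and this window are prefix-comparable and
  ED(P, rot Q s) <= 2 ED(P, Y_i); likewise the two tails are suffix-comparable.  Finally s is a
  partial sum of the length deviations |Y_j| - p, which are bounded by the block costs.
*)
theory Submission
  imports Defs "HOL-Library.Sublist"
begin

section \<open>Edit distance of concatenations\<close>

lemma ED_Nil2 [simp]: "ED xs [] = length xs"
  by (cases xs) auto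

lemma ED_sym: "ED xs ys = ED ys xs"
  by (induction xs ys rule: ED.induct) (auto simp: min.commute min.left_commute)

lemma ED_Cons_le: "ED (x # xs) ys \<le> ED xs ys + 1"
  by (cases ys) auto

lemma ED_append_left_le: "ED (zs @ xs) ys \<le> length zs + ED xs ys"
  by (induction zs) (auto intro: order.trans[OF ED_Cons_le])

lemma ED_length_le: "length xs \<le> ED xs ys + length ys"
  by (induction xs ys rule: ED.induct) auto

lemma ED_length_diff: "\<bar>int (length xs) - int (length ys)\<bar> \<le> int (ED xs ys)"
  using ED_length_le[of xs ys] ED_length_le[of ys xs] ED_sym[of xs ys] by linarith

lemma ED_append_le: "ED (xs @ xs') (ys @ ys') \<le> ED xs ys + ED xs' ys'"
proof (induction xs ys rule: ED.induct)
  case (1 ys)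
  then show ?case
    using ED_append_left_le[of ys ys' xs'] by (simp add: ED_sym)
next
  case (2 x xs)
  then show ?case
    using ED_append_left_le[of "x # xs" xs' ys'] by simp
next
  case (3 x xs y ys)
  then show ?case by auto
qed

lemma ED_append_split_le:
  "\<exists>ys1 ys2. ys = ys1 @ ys2 \<and> ED xs1 ys1 + ED xs2 ys2 \<le> ED (xs1 @ xs2) ys"
proof (induction xs1 ys rule: ED.induct)
  case (1 ys)
  show ?case by (rule exI[of _ "[]"]) simp
next
  case (2 x xs)
  show ?case by (rule exI[of _ "[]"]) simp
next
  case (3 x xs y ys)
  have "ED (x # xs @ xs2) (y # ys) = min (min (ED (xs @ xs2) (y # ys) + 1) (ED (x # xs @ xs2) ys + 1))
      (ED (xs @ xs2) ys + (if x = y then 0 else 1))"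
    by simp
  then consider "ED (x # xs @ xs2) (y # ys) = ED (xs @ xs2) (y # ys) + 1"
    | "ED (x # xs @ xs2) (y # ys) = ED (x # xs @ xs2) ys + 1"
    | "ED (x # xs @ xs2) (y # ys) = ED (xs @ xs2) ys + (if x = y then 0 else 1)"
    by linarith
  then show ?case
  proof cases
    case 1
    then obtain ys1 ys2 where "y # ys = ys1 @ ys2" "ED xs ys1 + ED xs2 ys2 \<le> ED (xs @ xs2) (y # ys)"
      using "3.IH"(1) by auto
    moreover have "ED (x # xs) ys1 \<le> ED xs ys1 + 1"
      by (rule ED_Cons_le)
    ultimately show ?thesis
      using 1 by (intro exI[of _ ys1] exI[of _ ys2]) auto
  next
    case 2
    then obtain ys1 ys2 where "ys = ys1 @ ys2" "ED (x # xs) ys1 + ED xs2 ys2 \<le> ED (x # xs @ xs2) ys"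
      using "3.IH"(2) by auto
    moreover have "ED (x # xs) (y # ys1) \<le> ED (x # xs) ys1 + 1"
      using ED_Cons_le[of y ys1 "x # xs"] by (simp add: ED_sym)
    ultimately show ?thesis
      using 2 by (intro exI[of _ "y # ys1"] exI[of _ ys2]) auto
  next
    case 3
    then obtain ys1 ys2 where "ys = ys1 @ ys2" "ED xs ys1 + ED xs2 ys2 \<le> ED (xs @ xs2) ys"
      using "3.IH"(3) by auto
    moreover have "ED (x # xs) (y # ys1) \<le> ED xs ys1 + (if x = y then 0 else 1)"
      by simp
    ultimately show ?thesis
      using 3 by (intro exI[of _ "y # ys1"] exI[of _ ys2]) auto
  qed
qed

lemma ED_concat_append_split_le:
  "\<exists>Ys Yt. length Ys = length Bs \<and> ys = concat Ys @ Yt \<and>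
     (\<Sum>j<length Bs. ED (Bs ! j) (Ys ! j)) + ED T Yt \<le> ED (concat Bs @ T) ys"
proof (induction Bs arbitrary: ys)
  case Nil
  show ?case by simp
next
  case (Cons B Bs)
  obtain ys1 ys2 where ys: "ys = ys1 @ ys2" "ED B ys1 + ED (concat Bs @ T) ys2 \<le> ED (B @ concat Bs @ T) ys"
    using ED_append_split_le by blast
  obtain Ys Yt where "length Ys = length Bs" "ys2 = concat Ys @ Yt"
      "(\<Sum>j<length Bs. ED (Bs ! j) (Ys ! j)) + ED T Yt \<le> ED (concat Bs @ T) ys2"
    using Cons.IH by blast
  with ys show ?case
    by (intro exI[of _ "ys1 # Ys"] exI[of _ Yt]) (auto simp: sum.lessThan_Suc_shift simp del: sum.lessThan_Suc)
qed

lemma ED_prepend_right_le: "ED xs (zs @ ys) \<le> length zs + ED xs ys"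
  using ED_append_left_le[of zs ys xs] by (simp add: ED_sym)

lemma ED_append_right_le: "ED xs (ys @ zs) \<le> ED xs ys + length zs"
  using ED_append_le[of xs "[]" ys zs] by simp

lemma ED_drop_prefix_le: "ED xs ys \<le> ED xs (zs @ ys) + length zs"
proof -
  obtain xs1 xs2 where xs: "xs = xs1 @ xs2" and split: "ED zs xs1 + ED ys xs2 \<le> ED (zs @ ys) xs"
    using ED_append_split_le by blast
  have "ED ys xs \<le> length xs1 + ED ys xs2"
    using ED_append_le[of "[]" ys xs1 xs2] xs by simp
  moreover have "length xs1 \<le> ED zs xs1 + length zs"
    using ED_length_le[of xs1 zs] by (simp add: ED_sym)
  ultimately show ?thesis
    using split ED_sym[of xs ys] ED_sym[of xs "zs @ ys"] by linarith
qed

lemma ED_drop_suffix_le: "ED xs ys \<le> ED xs (ys @ zs) + length zs"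
proof -
  obtain xs1 xs2 where xs: "xs = xs1 @ xs2" and split: "ED ys xs1 + ED zs xs2 \<le> ED (ys @ zs) xs"
    using ED_append_split_le by blast
  have "ED ys xs \<le> ED ys xs1 + length xs2"
    using ED_append_le[of ys "[]" xs1 xs2] xs by simp
  moreover have "length xs2 \<le> ED zs xs2 + length zs"
    using ED_length_le[of xs2 zs] by (simp add: ED_sym)
  ultimately show ?thesis
    using split ED_sym[of xs ys] ED_sym[of xs "ys @ zs"] by linarith
qed

lemma ED_prefix_comparable_le:
  assumes len: "length xs = length ys" and "prefix ys ws \<or> prefix ws ys"
  shows "ED xs ys \<le> 2 * ED xs ws"
proof -
  have "length ws \<le> ED xs ws + length xs" "length xs \<le> ED xs ws + length ws"
    using ED_length_le[of ws xs] ED_length_le[of xs ws] by (simp_all add: ED_sym)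
  from assms(2) show ?thesis
  proof
    assume "prefix ys ws"
    then obtain zs where "ws = ys @ zs" by (auto simp: prefix_def)
    with len \<open>length ws \<le> _\<close> show ?thesis using ED_drop_suffix_le[of xs ys zs] by simp
  next
    assume "prefix ws ys"
    then obtain zs where "ys = ws @ zs" by (auto simp: prefix_def)
    with len \<open>length xs \<le> _\<close> show ?thesis using ED_append_right_le[of xs ws zs] by simp
  qed
qed

lemma ED_suffix_comparable_le:
  assumes len: "length xs = length ys" and "suffix ys ws \<or> suffix ws ys"
  shows "ED xs ys \<le> 2 * ED xs ws"
proof -
  have "length ws \<le> ED xs ws + length xs" "length xs \<le> ED xs ws + length ws"
    using ED_length_le[of ws xs] ED_length_le[of xs ws] by (simp_all add: ED_sym)
  from assms(2) show ?thesis
  proof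
    assume "suffix ys ws"
    then obtain zs where "ws = zs @ ys" by (auto simp: suffix_def)
    with len \<open>length ws \<le> _\<close> show ?thesis using ED_drop_prefix_le[of xs ys zs] by simp
  next
    assume "suffix ws ys"
    then obtain zs where "ys = zs @ ws" by (auto simp: suffix_def)
    with len \<open>length xs \<le> _\<close> show ?thesis using ED_prepend_right_le[of xs zs ws] by simp
  qed
qed

lemma ED_swap_append_le: "ED xs (A @ B) \<le> ED xs (B @ A) + 2 * min (length A) (length B)"
  using ED_prepend_right_le[of xs A B] ED_drop_suffix_le[of xs B A]
    ED_append_right_le[of xs A B] ED_drop_prefix_le[of xs A B]
  by (simp add: min_def)

lemma ED_concat_replicate_le:
  "ED (concat (replicate d xs)) (concat (replicate d ys)) \<le> d * ED xs ys"
  by (induction d) (auto intro: order.trans[OF ED_append_le])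

lemma concat_replicate_append_rotate:
  "concat (replicate k (A @ B)) @ A = A @ concat (replicate k (B @ A))"
  by (induction k) auto

lemma ED_concat_replicate_swap_le:
  "ED xs (concat (replicate d (A @ B))) \<le> ED xs (concat (replicate d (B @ A))) + 2 * min (length A) (length B)"
proof (cases d)
  case (Suc k)
  let ?U = "A @ concat (replicate k (B @ A))" and ?V = "B @ concat (replicate k (A @ B))"
  have "concat (replicate d (A @ B)) = A @ ?V" "concat (replicate d (B @ A)) = ?V @ A"
    "concat (replicate d (A @ B)) = ?U @ B" "concat (replicate d (B @ A)) = B @ ?U"
    using Suc concat_replicate_append_rotate[of k A B] concat_replicate_append_rotate[of k B A]
    by simp_all
  moreover have "ED xs (A @ ?V) \<le> ED xs (?V @ A) + 2 * length A"
    using ED_swap_append_le[of xs A ?V] min.cobounded1[of "length A"] by linarith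
  moreover have "ED xs (?U @ B) \<le> ED xs (B @ ?U) + 2 * length B"
    using ED_swap_append_le[of xs ?U B] min.cobounded2[of _ "length B"] by linarith
  ultimately show ?thesis
    by (metis min_def)
qed simp

section \<open>Periodic strings and their rotations\<close>

lemma take_pow_prefix: "m \<le> n \<Longrightarrow> take m (pow_prefix Q n) = pow_prefix Q m"
  by (simp add: pow_prefix_def take_map)

lemma pow_prefix_length [simp]: "length (pow_prefix Q n) = n"
  by (simp add: pow_prefix_def)

lemma pow_prefix_eq_concat_replicate:
  assumes "m \<le> length Q"
  shows "pow_prefix Q (k * length Q + m) = concat (replicate k Q) @ take m Q"
proof (induction k)
  case 0
  show ?case using assms by (intro nth_equalityI) (auto simp: pow_prefix_def)
next
  case (Suc k)
  have "[0..<Suc k * length Q + m] = [0..<length Q] @ [length Q..<length Q + (k * length Q + m)]"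
    using upt_add_eq_append[of 0 "length Q" "k * length Q + m"] by (simp add: add.assoc)
  also have "[length Q..<length Q + (k * length Q + m)] = map (\<lambda>i. i + length Q) [0..<k * length Q + m]"
    by (simp add: map_add_upt add.commute)
  finally have "[0..<Suc k * length Q + m] = [0..<length Q] @ map (\<lambda>i. i + length Q) [0..<k * length Q + m]" .
  moreover have "map (\<lambda>i. Q ! (i mod length Q)) [0..<length Q] = Q"
    by (intro nth_equalityI) auto
  ultimately show ?case
    using Suc by (simp add: pow_prefix_def o_def)
qed

lemma length_rot [simp]: "length (rot Q s) = length Q"
  by (simp add: rot_def)

lemma rot_add_mult: "rot Q (s + int k * int (length Q)) = rot Q s"
  by (simp add: rot_def add.assoc[symmetric])

lemma rot_of_nat: "rot Q (int y) = drop y (pow_prefix Q (y + length Q))"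
  by (intro nth_equalityI) (auto simp: rot_def pow_prefix_def nat_mod_as_int add.commute)

lemma rot_eq_rotate: "rot Q s = rotate (nat (s mod int (length Q))) Q"
proof (cases "Q = []")
  case False
  then show ?thesis
    by (intro nth_equalityI)
      (auto simp: rot_def nth_rotate nat_mod_as_int mod_add_right_eq add.commute nat_less_iff)
qed (simp add: rot_def)

lemma min_nat_mod_le_abs:
  assumes "0 < p"
  shows "min (nat (s mod int p)) (p - nat (s mod int p)) \<le> nat \<bar>s\<bar>"
proof (cases "0 \<le> s")
  case True
  then have "s mod int p \<le> s" by (simp add: zmod_le_nonneg_dividend)
  with True show ?thesis by (simp add: min.coboundedI1)
next
  case False
  then have "s div int p < 0" using assms by (simp add: pos_imp_zdiv_neg_iff)
  then have "s + int p \<le> s mod int p"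
    using assms minus_div_mult_eq_mod[of s "int p"] mult_right_mono[of "s div int p" "-1" "int p"] by simp
  with False show ?thesis by (simp add: min.coboundedI2)
qed

section \<open>The two bounds\<close>

lemma abs_sum_prefix_le:
  fixes \<delta> :: "nat \<Rightarrow> int"
  assumes "(\<Sum>j<d. \<delta> j) + c = 0" and "i \<le> d"
  shows "2 * \<bar>\<Sum>j<i. \<delta> j\<bar> \<le> (\<Sum>j<d. \<bar>\<delta> j\<bar>) + \<bar>c\<bar>"
proof -
  have split: "(\<Sum>j<d. f j) = (\<Sum>j<i. f j) + (\<Sum>j\<in>{i..<d}. f j)" for f :: "nat \<Rightarrow> int"
    using sum.atLeastLessThan_concat[of 0 i d f] assms(2) by (simp add: atLeast0LessThan)
  have "\<bar>\<Sum>j<i. \<delta> j\<bar> \<le> (\<Sum>j<i. \<bar>\<delta> j\<bar>)"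
    by (rule sum_abs)
  moreover have "\<bar>\<Sum>j\<in>{i..<d}. \<delta> j\<bar> \<le> (\<Sum>j\<in>{i..<d}. \<bar>\<delta> j\<bar>)"
    by (rule sum_abs)
  ultimately show ?thesis
    using assms(1) split[of \<delta>] split[of "\<lambda>j. \<bar>\<delta> j\<bar>"] by linarith
qed

lemma length_concat_take:
  "i \<le> length xss \<Longrightarrow> length (concat (take i xss)) = (\<Sum>j<i. length (xss ! j))"
  by (induction i) (auto simp: take_Suc_conv_app_nth)

lemma ED_block_offset_le:
  assumes "length (concat Ys @ Yt) = length Ys * length P + length T" and "i \<le> length Ys"
  shows "2 * \<bar>int (length (concat (take i Ys))) - int (i * length P)\<bar>
    \<le> int (\<Sum>j<length Ys. ED P (Ys ! j)) + int (ED T Yt)"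
proof -
  define \<delta> where "\<delta> j = int (length (Ys ! j)) - int (length P)" for j
  have "length Ys * length P + length T = (\<Sum>j<length Ys. length (Ys ! j)) + length Yt"
    using assms(1) length_concat_take[of "length Ys" Ys] by simp
  then have "int (length Ys) * int (length P) + int (length T)
      = int (\<Sum>j<length Ys. length (Ys ! j)) + int (length Yt)"
    by (metis of_nat_add of_nat_mult)
  then have "(\<Sum>j<length Ys. \<delta> j) + (int (length Yt) - int (length T)) = 0"
    by (simp add: \<delta>_def sum_subtractf flip: of_nat_sum)
  moreover have "int (length (concat (take i Ys))) - int (i * length P) = (\<Sum>j<i. \<delta> j)"
    using length_concat_take[of i Ys] assms(2) by (simp add: \<delta>_def sum_subtractf)
  ultimately have "2 * \<bar>int (length (concat (take i Ys))) - int (i * length P)\<bar>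
      \<le> (\<Sum>j<length Ys. \<bar>\<delta> j\<bar>) + \<bar>int (length Yt) - int (length T)\<bar>"
    using abs_sum_prefix_le assms(2) by simp
  moreover have "(\<Sum>j<length Ys. \<bar>\<delta> j\<bar>) \<le> int (\<Sum>j<length Ys. ED P (Ys ! j))"
    unfolding \<delta>_def of_nat_sum by (intro sum_mono) (metis ED_length_diff abs_minus_commute)
  moreover have "\<bar>int (length Yt) - int (length T)\<bar> \<le> int (ED T Yt)"
    using ED_length_diff[of T Yt] by (simp add: abs_minus_commute)
  ultimately show ?thesis by linarith
qed

lemma ED_concat_replicate_rot_le:
  assumes "length P = length Q"
  shows "ED (concat (replicate d P) @ T) (concat (replicate d Q) @ T')
    \<le> ED T T' + (d * ED P (rot Q s) + 2 * nat \<bar>s\<bar>)"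
proof (cases "Q = []")
  case False
  define t where "t = nat (s mod int (length Q))"
  have t: "t < length Q"
    using False by (simp add: t_def nat_less_iff)
  have rot: "rot Q s = drop t Q @ take t Q"
    using t by (simp add: rot_eq_rotate rotate_drop_take t_def[symmetric])
  have "ED (concat (replicate d P) @ T) (concat (replicate d Q) @ T')
      \<le> ED (concat (replicate d P)) (concat (replicate d (take t Q @ drop t Q))) + ED T T'"
    using ED_append_le by simp
  also have "ED (concat (replicate d P)) (concat (replicate d (take t Q @ drop t Q)))
      \<le> ED (concat (replicate d P)) (concat (replicate d (rot Q s))) + 2 * nat \<bar>s\<bar>"
    using ED_concat_replicate_swap_le[of "concat (replicate d P)" d "take t Q" "drop t Q"]
      min_nat_mod_le_abs[of "length Q" s] False t
    by (simp add: rot t_def[symmetric] min.commute)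
  also have "ED (concat (replicate d P)) (concat (replicate d (rot Q s))) \<le> d * ED P (rot Q s)"
    by (rule ED_concat_replicate_le)
  finally show ?thesis by simp
qed (use assms in simp)

lemma ED_rot_le_block:
  assumes "length P = length Q" and "prefix (pre @ B) (pow_prefix Q N)"
  shows "ED P (rot Q (int (length pre))) \<le> 2 * ED P B"
proof -
  \<comment> \<open>both are prefixes of the window W of the periodic string starting at position |pre|\<close>
  define W where "W = drop (length pre) (pow_prefix Q (max N (length pre + length Q)))"
  have "rot Q (int (length pre)) = take (length Q) W"
    by (simp add: W_def rot_of_nat take_drop take_pow_prefix add.commute)
  then have "prefix (rot Q (int (length pre))) W"
    by (simp add: take_is_prefix)
  moreover have "prefix (pow_prefix Q N) (pow_prefix Q (max N (length pre + length Q)))"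
    by (metis take_pow_prefix max.cobounded1 take_is_prefix)
  with assms(2) have "prefix B W"
    unfolding W_def by (auto simp: prefix_def)
  ultimately show ?thesis
    using ED_prefix_comparable_le assms(1) prefix_same_cases by (metis length_rot)
qed

lemma ex_rot_shift_le_blocks:
  assumes len: "length P = length Q" and "r \<le> length P"
    and Y: "pow_prefix Q (d * length Q + r) = concat Ys @ Yt" and d: "length Ys = d"
  shows "\<exists>s. d * ED P (rot Q s) + 2 * nat \<bar>s\<bar> \<le> 3 * (\<Sum>j<d. ED P (Ys ! j)) + ED (take r P) Yt"
proof (cases "d = 0")
  case False
  define e where "e j = ED P (Ys ! j)" for j
  obtain i where i: "i < d" and i_min: "\<And>j. j < d \<Longrightarrow> e i \<le> e j"
    using ex_has_least_nat[of "\<lambda>i. i < d" 0 e] False by auto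
  define pre where "pre = concat (take i Ys)"
  define s where "s = int (length pre) - int (i * length Q)"
  have "concat Ys = concat (take i Ys @ Ys ! i # drop (Suc i) Ys)"
    using id_take_nth_drop[of i Ys] i d by (metis)
  then have "concat Ys = pre @ Ys ! i @ concat (drop (Suc i) Ys)"
    by (simp add: pre_def)
  then have "prefix (pre @ Ys ! i) (pow_prefix Q (d * length Q + r))"
    using Y by (simp add: prefix_def)
  moreover have "rot Q (int (length pre)) = rot Q s"
    using rot_add_mult[of Q s i] by (simp add: s_def)
  ultimately have block: "ED P (rot Q s) \<le> 2 * e i"
    using ED_rot_le_block[OF len] by (fastforce simp: e_def)
  have "d * e i \<le> (\<Sum>j<d. e j)"
    using sum_mono[of "{..<d}" "\<lambda>_. e i" e] i_min by simp
  with block have "d * ED P (rot Q s) \<le> 2 * (\<Sum>j<d. e j)"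
    by (metis mult.left_commute mult_le_mono2 order.trans)
  moreover have "2 * \<bar>s\<bar> \<le> int (\<Sum>j<d. e j) + int (ED (take r P) Yt)"
    using ED_block_offset_le[of Ys Yt P "take r P" i] arg_cong[OF Y, of length] len assms(2) i d
    by (simp add: s_def pre_def e_def)
  ultimately have "d * ED P (rot Q s) + 2 * nat \<bar>s\<bar> \<le> 3 * (\<Sum>j<d. e j) + ED (take r P) Yt"
    by linarith
  then show ?thesis
    by (auto simp: e_def)
qed (intro exI[of _ 0], simp)

lemma ED_pow_prefix_lower_bound:
  assumes "length P = length Q" and "r \<le> length P"
  shows "\<exists>s. ED (take r P) (take r Q) + (d * ED P (rot Q s) + 2 * nat \<bar>s\<bar>)
    \<le> 3 * ED (concat (replicate d P) @ take r P) (pow_prefix Q (d * length Q + r))"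
proof -
  let ?Y = "pow_prefix Q (d * length Q + r)"
  obtain Ys Yt where Ys: "length Ys = d" and Y: "?Y = concat Ys @ Yt"
    and ED_ge: "(\<Sum>j<d. ED P (Ys ! j)) + ED (take r P) Yt \<le> ED (concat (replicate d P) @ take r P) ?Y"
    using ED_concat_append_split_le[where Bs = "replicate d P" and T = "take r P" and ys = ?Y] by auto
  have "?Y = concat (replicate d Q) @ take r Q"
    using pow_prefix_eq_concat_replicate[of r Q d] assms by simp
  then have "suffix Yt ?Y" "suffix (take r Q) ?Y"
    using Y by (metis suffixI)+
  then have "ED (take r P) (take r Q) \<le> 2 * ED (take r P) Yt"
    using ED_suffix_comparable_le suffix_same_cases assms by (metis length_take min.absorb2)
  moreover obtain s where "d * ED P (rot Q s) + 2 * nat \<bar>s\<bar> \<le> 3 * (\<Sum>j<d. ED P (Ys ! j)) + ED (take r P) Yt"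
    using ex_rot_shift_le_blocks[OF assms Y Ys] by blast
  ultimately show ?thesis
    using ED_ge by (intro exI[of _ s]) linarith
qed

theorem lemma5p4:
  fixes P Q :: "'a list" and n :: nat
  assumes "length P = length Q" and "length P > 0" and "n > 0"
  defines "p \<equiv> length P"
  defines "d \<equiv> n div p" and "r \<equiv> n mod p"
  defines "X \<equiv> pow_prefix P n" and "Y \<equiv> pow_prefix Q n"
  defines "M \<equiv> (LEAST v. \<exists>s::int. v = d * ED P (rot Q s) + 2 * nat \<bar>s\<bar>)"
  shows "ED X Y \<le> ED (take r P) (take r Q) + M
       \<and> ED (take r P) (take r Q) + M \<le> 3 * ED X Y"
proof -
  have r: "r \<le> length P" and n: "n = d * length Q + r"
    using assms(1,2) by (simp_all add: p_def d_def r_def)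
  have X: "X = concat (replicate d P) @ take r P"
    using pow_prefix_eq_concat_replicate[OF r, of d] assms(1) by (simp add: X_def n)
  have Y: "Y = concat (replicate d Q) @ take r Q"
    using pow_prefix_eq_concat_replicate[of r Q d] r assms(1) by (simp add: Y_def n)
  have "\<exists>s::int. M = d * ED P (rot Q s) + 2 * nat \<bar>s\<bar>"
    unfolding M_def by (rule LeastI_ex) blast
  then obtain s0 :: int where M: "M = d * ED P (rot Q s0) + 2 * nat \<bar>s0\<bar>"
    by blast
  obtain s1 :: int where s1:
    "ED (take r P) (take r Q) + (d * ED P (rot Q s1) + 2 * nat \<bar>s1\<bar>) \<le> 3 * ED X Y"
    using ED_pow_prefix_lower_bound[OF assms(1) r, of d] by (auto simp: X Y_def n)
  have "M \<le> d * ED P (rot Q s1) + 2 * nat \<bar>s1\<bar>"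
    unfolding M_def by (rule Least_le) blast
  moreover have "ED X Y \<le> ED (take r P) (take r Q) + M"
    using ED_concat_replicate_rot_le[OF assms(1)] by (simp add: X Y M)
  ultimately show ?thesis
    using s1 by linarith
qed

end
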